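(* Let $(k,R,t)\in\mathbb{R}^3$ with $R>0$, $t\neq 0$, $k\neq 0$, $k\neq 1$, let $c=\frac{1-t^2}{1+t^2}$, $s=\frac{2t}{1+t^2}$, $g_k(u)=1-ks^2+2ksc\,u+ks^2u^2$, and let $G(X,u)=0$ be the reduced slope-chart equation of the trisector at its point at infinity $p_\infty=[0:0:1:0]$ (defined in the context). Then the local real projective structure near $p_\infty$ is constant on each connected component of $\{(k,R,t): R>0,\ t\neq 0,\ k\neq 0,\ k\neq 1\}$. More precisely: (1) If $k<0$ or $k>1$, then $g_k$ has two distinct real roots $u_+$ and $u_-$, and near each point $(X,u)=(0,u_\pm)$ the real zero set of $G$ is a transverse real $X$-shaped crossing (two smooth real branches crossing transversely). (2) If $0<k<1$, then $g_k$ has no real root, and no real branch of $\{G=0\}$ approaches the exceptional line $X=0$ at finite slope $u$. Consequently, the local topology at infinity is unchanged within each chamber of the complement of $\{k=0\}\cup\{k=1\}$.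
   Context: The trisector is the common zero set in $\mathbb{R}^3$ of $F_1=y^2-(xs-yc)^2+2z-1$ and $F_2=(x^2-2kz+R^2+k^2)^2-4R^2(x^2+y^2)$ (bisectors of the $x$-axis with the line through $(0,0,1)$ of direction $(c,s,0)$, and of the $x$-axis with the circle of radius $R$ centered at $(0,0,k)$ in the plane $z=k$). Homogenizations: $F_1^h=Y^2-(Xs-Yc)^2+2ZW-W^2$, $F_2^h=(X^2-2kZW+(R^2+k^2)W^2)^2-4R^2W^2(X^2+Y^2)$; the projective closure meets $W=0$ only at $p_\infty$. In the chart $Z=1$, $F_1^h(X,Y,1,W)=0$ is solved locally near the origin as $W=\omega(X,Y)=Q(X,Y)+O(\|(X,Y)\|^4)$ with $Q(X,Y)=\tfrac12(s^2X^2-2scXY-s^2Y^2)$. Slope coordinates: $Y=uX$. The reduced local equation is $G(X,u)=X^{-4}F_2^h(X,uX,1,\omega(X,uX))=g_k(u)^2+X^2H(X,u)$, where $H(X,u)=2(R^2+k^2)g_k(u)q(u)^2-4R^2(1+u^2)q(u)^2+O(X^2)$ and $q(u)=\tfrac12(s^2-2scu-s^2u^2)$. The line $X=0$ in the $(X,u)$-plane is the exceptional line parametrizing directions at $p_\infty$. *)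

theory Defs
  imports "HOL-Analysis.Analysis"
begin

text \<open>Rational parametrisation of the direction (c,s,0) of the line.\<close>
definition cpar :: "real \<Rightarrow> real" where
  "cpar t = (1 - t^2) / (1 + t^2)"

definition spar :: "real \<Rightarrow> real" where
  "spar t = 2 * t / (1 + t^2)"

text \<open>Homogenised bisector equations F1^h, F2^h in coordinates (X,Y,Z,W).\<close>
definition F1h :: "real \<Rightarrow> real \<Rightarrow> real \<Rightarrow> real \<Rightarrow> real \<Rightarrow> real \<Rightarrow> real" where
  "F1h s c X Y Z W = Y^2 - (X * s - Y * c)^2 + 2*Z*W - W^2"

definition F2h :: "real \<Rightarrow> real \<Rightarrow> real \<Rightarrow> real \<Rightarrow> real \<Rightarrow> real \<Rightarrow> real" where
  "F2h k R X Y Z W = (X^2 - 2*k*Z*W + (R^2 + k^2)*W^2)^2 - 4*R^2*W^2*(X^2 + Y^2)"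

text \<open>The local solution W = omega(X,Y) of F1h(X,Y,1,W) = 0 near the origin
  (the root of the quadratic in W with omega(0,0) = 0).\<close>
definition omega :: "real \<Rightarrow> real \<Rightarrow> real \<Rightarrow> real \<Rightarrow> real" where
  "omega s c X Y = 1 - sqrt (1 + Y^2 - (X * s - Y * c)^2)"

definition gk :: "real \<Rightarrow> real \<Rightarrow> real \<Rightarrow> real" where
  "gk k t u = 1 - k * (spar t)^2 + 2 * k * spar t * cpar t * u + k * (spar t)^2 * u^2"

text \<open>Reduced slope-chart equation G(X,u) = X^(-4) F2h(X,uX,1,omega(X,uX));
  at X = 0 it is given its continuous (analytic) extension g_k(u)^2.\<close>
definition trisectorG :: "real \<Rightarrow> real \<Rightarrow> real \<Rightarrow> real \<Rightarrow> real \<Rightarrow> real" where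
  "trisectorG k R t X u =
     (if X = 0 then (gk k t u)^2
      else F2h k R X (u*X) 1 (omega (spar t) (cpar t) X (u*X)) / X^4)"

definition smooth_on :: "real set \<Rightarrow> (real \<Rightarrow> real) \<Rightarrow> bool" where
  "smooth_on S f \<longleftrightarrow>
     (\<exists>D :: nat \<Rightarrow> real \<Rightarrow> real. D 0 = f \<and>
        (\<forall>n. \<forall>x\<in>S. (D n has_real_derivative D (Suc n) x) (at x)))"

end

(*
  Put W = X^2 m(X, u) for the local root of F1 = 0 in the slope chart. Then the reduced equation
  factors as G = (A + X B) (A - X B) with A = 1 - 2 k m + (R^2 + k^2) X^2 m^2 and
  B = 2 R m sqrt (1 + u^2), and both factors restrict to g_k on the exceptional line X = 0.
  At a simple real root u0 of g_k, which exists exactly when k < 0 or k > 1, each factor has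
  nonzero u-derivative, so by the implicit function theorem its zero set near (0, u0) is a graph
  u = phi X; the slopes of the two graphs at X = 0 differ by 2 B(0, u0) / g_k'(u0), which is
  nonzero because m(0, u0) = 1 / (2 k). Every function involved is built from polynomials by
  field operations and square roots, a class closed under partial differentiation, and this
  makes the branches C^infinity. For 0 < k < 1 we have g_k > 0, so G(0, u) = g_k(u)^2 > 0 and,
  by continuity, G has no zeros near the exceptional line.
*)
theory Submission
  imports Defs
begin

section \<open>Elementary functions of two real variables\<close>

inductive_set elementary :: "(real \<times> real) set \<Rightarrow> (real \<times> real \<Rightarrow> real) set" for U where
  elementary_const: "(\<lambda>z. c) \<in> elementary U"
| elementary_fst: "fst \<in> elementary U"
| elementary_snd: "snd \<in> elementary U"
| elementary_add: "f \<in> elementary U \<Longrightarrow> g \<in> elementary U \<Longrightarrow> (\<lambda>z. f z + g z) \<in> elementary U"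
| elementary_mult: "f \<in> elementary U \<Longrightarrow> g \<in> elementary U \<Longrightarrow> (\<lambda>z. f z * g z) \<in> elementary U"
| elementary_inverse:
    "f \<in> elementary U \<Longrightarrow> (\<forall>z\<in>U. f z \<noteq> 0) \<Longrightarrow> (\<lambda>z. inverse (f z)) \<in> elementary U"
| elementary_sqrt: "f \<in> elementary U \<Longrightarrow> (\<forall>z\<in>U. f z > 0) \<Longrightarrow> (\<lambda>z. sqrt (f z)) \<in> elementary U"

lemma elementary_subset: "f \<in> elementary U \<Longrightarrow> V \<subseteq> U \<Longrightarrow> f \<in> elementary V"
  by (induction rule: elementary.induct) (auto intro: elementary.intros)

lemma elementary_minus: "f \<in> elementary U \<Longrightarrow> (\<lambda>z. - f z) \<in> elementary U"
  using elementary_mult[OF elementary_const[of "-1"], of f U] by simp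

lemma elementary_diff:
  "f \<in> elementary U \<Longrightarrow> g \<in> elementary U \<Longrightarrow> (\<lambda>z. f z - g z) \<in> elementary U"
  using elementary_add[OF _ elementary_minus, of f U g] by simp

lemma elementary_power: "f \<in> elementary U \<Longrightarrow> (\<lambda>z. f z ^ n) \<in> elementary U"
  by (induction n) (auto intro: elementary.intros)

lemma elementary_divide:
  "f \<in> elementary U \<Longrightarrow> g \<in> elementary U \<Longrightarrow> \<forall>z\<in>U. g z \<noteq> 0 \<Longrightarrow> (\<lambda>z. f z / g z) \<in> elementary U"
  using elementary_mult[OF _ elementary_inverse, of f U g] by (simp add: divide_inverse)

definition has_partials_on ::
    "(real \<times> real) set \<Rightarrow> (real \<times> real \<Rightarrow> real) \<Rightarrow> (real \<times> real \<Rightarrow> real) \<Rightarrow> (real \<times> real \<Rightarrow> real) \<Rightarrow> bool"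
  where "has_partials_on U f f1 f2 \<longleftrightarrow>
           (\<forall>z\<in>U. (f has_derivative (\<lambda>h. fst h * f1 z + snd h * f2 z)) (at z))"

lemma has_partials_on_add:
  assumes "has_partials_on U f f1 f2" "has_partials_on U g g1 g2"
  shows "has_partials_on U (\<lambda>z. f z + g z) (\<lambda>z. f1 z + g1 z) (\<lambda>z. f2 z + g2 z)"
  using assms unfolding has_partials_on_def
  by (auto intro!: has_derivative_eq_rhs[OF has_derivative_add] simp: algebra_simps)

lemma has_partials_on_minus:
  "has_partials_on U f f1 f2 \<Longrightarrow> has_partials_on U (\<lambda>z. - f z) (\<lambda>z. - f1 z) (\<lambda>z. - f2 z)"
  unfolding has_partials_on_def by (auto intro!: has_derivative_eq_rhs[OF has_derivative_minus])

lemma has_partials_on_subset: "has_partials_on U f f1 f2 \<Longrightarrow> V \<subseteq> U \<Longrightarrow> has_partials_on V f f1 f2"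
  unfolding has_partials_on_def by blast

lemma has_partials_on_mult:
  assumes "has_partials_on U f f1 f2" "has_partials_on U g g1 g2"
  shows "has_partials_on U (\<lambda>z. f z * g z)
           (\<lambda>z. f z * g1 z + f1 z * g z) (\<lambda>z. f z * g2 z + f2 z * g z)"
  using assms unfolding has_partials_on_def
  by (auto intro!: has_derivative_eq_rhs[OF has_derivative_mult] simp: algebra_simps)

lemma has_partials_on_inverse:
  assumes "has_partials_on U f f1 f2" "\<forall>z\<in>U. f z \<noteq> 0"
  shows "has_partials_on U (\<lambda>z. inverse (f z))
           (\<lambda>z. - (f1 z * (inverse (f z) * inverse (f z))))
           (\<lambda>z. - (f2 z * (inverse (f z) * inverse (f z))))"
  unfolding has_partials_on_def
proof
  fix z assume "z \<in> U"
  with assms have "((\<lambda>z. inverse (f z)) has_derivative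
      (\<lambda>h. - (inverse (f z) * (fst h * f1 z + snd h * f2 z) * inverse (f z)))) (at z)"
    unfolding has_partials_on_def by (intro Deriv.has_derivative_inverse) auto
  then show "((\<lambda>z. inverse (f z)) has_derivative (\<lambda>h. fst h * - (f1 z * (inverse (f z) * inverse (f z)))
      + snd h * - (f2 z * (inverse (f z) * inverse (f z))))) (at z)"
    by (rule has_derivative_eq_rhs) (simp add: fun_eq_iff algebra_simps)
qed

lemma has_partials_on_sqrt:
  assumes "has_partials_on U f f1 f2" "\<forall>z\<in>U. f z > 0"
  shows "has_partials_on U (\<lambda>z. sqrt (f z))
           (\<lambda>z. f1 z * inverse (sqrt (f z)) * (1/2)) (\<lambda>z. f2 z * inverse (sqrt (f z)) * (1/2))"
  unfolding has_partials_on_def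
proof
  fix z assume "z \<in> U"
  with assms have "((\<lambda>z. sqrt (f z)) has_derivative
      (\<lambda>h. (fst h * f1 z + snd h * f2 z) * (inverse (sqrt (f z)) / 2))) (at z)"
    unfolding has_partials_on_def by (intro has_derivative_real_sqrt) auto
  then show "((\<lambda>z. sqrt (f z)) has_derivative (\<lambda>h. fst h * (f1 z * inverse (sqrt (f z)) * (1/2))
      + snd h * (f2 z * inverse (sqrt (f z)) * (1/2)))) (at z)"
    by (rule has_derivative_eq_rhs) (simp add: fun_eq_iff algebra_simps)
qed

lemma elementary_has_partials:
  "f \<in> elementary U \<Longrightarrow> \<exists>f1\<in>elementary U. \<exists>f2\<in>elementary U. has_partials_on U f f1 f2"
proof (induction rule: elementary.induct)
  case (elementary_const c)
  have "has_partials_on U (\<lambda>z. c) (\<lambda>z. 0) (\<lambda>z. 0)"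
    by (simp add: has_partials_on_def)
  then show ?case by (blast intro: elementary.intros)
next
  case elementary_fst
  have "has_partials_on U fst (\<lambda>z. 1) (\<lambda>z. 0)"
    by (auto simp: has_partials_on_def intro: has_derivative_eq_rhs[OF has_derivative_fst[OF has_derivative_ident]])
  then show ?case by (blast intro: elementary.intros)
next
  case elementary_snd
  have "has_partials_on U snd (\<lambda>z. 0) (\<lambda>z. 1)"
    by (auto simp: has_partials_on_def intro: has_derivative_eq_rhs[OF has_derivative_snd[OF has_derivative_ident]])
  then show ?case by (blast intro: elementary.intros)
next
  case (elementary_add f g)
  then obtain f1 f2 g1 g2 where "f1 \<in> elementary U" "f2 \<in> elementary U" "g1 \<in> elementary U"
    "g2 \<in> elementary U" "has_partials_on U f f1 f2" "has_partials_on U g g1 g2" by blast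
  then show ?case
    by (intro bexI[of _ "\<lambda>z. f1 z + g1 z"] bexI[of _ "\<lambda>z. f2 z + g2 z"] has_partials_on_add)
      (auto intro: elementary.intros)
next
  case (elementary_mult f g)
  then obtain f1 f2 g1 g2 where "f1 \<in> elementary U" "f2 \<in> elementary U" "g1 \<in> elementary U"
    "g2 \<in> elementary U" "has_partials_on U f f1 f2" "has_partials_on U g g1 g2" by blast
  with elementary_mult.hyps show ?case
    by (intro bexI[of _ "\<lambda>z. f z * g1 z + f1 z * g z"] bexI[of _ "\<lambda>z. f z * g2 z + f2 z * g z"]
        has_partials_on_mult) (auto intro: elementary.intros)
next
  case (elementary_inverse f)
  then obtain f1 f2 where "f1 \<in> elementary U" "f2 \<in> elementary U" "has_partials_on U f f1 f2"
    by blast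
  with elementary_inverse.hyps show ?case
    by (intro bexI[of _ "\<lambda>z. - (f1 z * (inverse (f z) * inverse (f z)))"]
        bexI[of _ "\<lambda>z. - (f2 z * (inverse (f z) * inverse (f z)))"] has_partials_on_inverse)
      (auto intro!: elementary.intros elementary_minus)
next
  case (elementary_sqrt f)
  then obtain f1 f2 where f: "f1 \<in> elementary U" "f2 \<in> elementary U" "has_partials_on U f f1 f2"
    by blast
  have inv: "(\<lambda>z. inverse (sqrt (f z))) \<in> elementary U"
    using elementary_sqrt.hyps by (auto intro!: elementary.intros)
  have "(\<lambda>z. f1 z * inverse (sqrt (f z)) * (1/2)) \<in> elementary U"
    "(\<lambda>z. f2 z * inverse (sqrt (f z)) * (1/2)) \<in> elementary U"
    by (rule elementary_mult[OF elementary_mult[OF f(1) inv] elementary_const],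
        rule elementary_mult[OF elementary_mult[OF f(2) inv] elementary_const])
  with f elementary_sqrt.hyps show ?case by (blast intro: has_partials_on_sqrt)
qed

lemma has_partials_on_isCont: "has_partials_on U f f1 f2 \<Longrightarrow> z \<in> U \<Longrightarrow> isCont f z"
  unfolding has_partials_on_def using has_derivative_continuous by blast

lemma elementary_isCont: "f \<in> elementary U \<Longrightarrow> z \<in> U \<Longrightarrow> isCont f z"
  using elementary_has_partials has_partials_on_isCont by blast

lemma has_partials_on_deriv_fst:
  assumes "has_partials_on U f f1 f2" "(x, y) \<in> U"
  shows "((\<lambda>X. f (X, y)) has_real_derivative f1 (x, y)) (at x)"
proof -
  have "((\<lambda>X. (X, y)) has_derivative (\<lambda>h. (h, 0))) (at x)"
    by (auto intro!: derivative_eq_intros)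
  from has_derivative_compose[OF this] assms
  have "((\<lambda>X. f (X, y)) has_derivative (\<lambda>h. fst (h, 0::real) * f1 (x, y) + snd (h, 0::real) * f2 (x, y))) (at x)"
    unfolding has_partials_on_def by blast
  then show ?thesis
    unfolding has_field_derivative_def by (rule has_derivative_eq_rhs) (auto simp: fun_eq_iff)
qed

lemma has_partials_on_deriv_snd:
  assumes "has_partials_on U f f1 f2" "(x, y) \<in> U"
  shows "((\<lambda>u. f (x, u)) has_real_derivative f2 (x, y)) (at y)"
proof -
  have "((\<lambda>u. (x, u)) has_derivative (\<lambda>h. (0, h))) (at y)"
    by (auto intro!: derivative_eq_intros)
  from has_derivative_compose[OF this] assms
  have "((\<lambda>u. f (x, u)) has_derivative (\<lambda>h. fst (0::real, h) * f1 (x, y) + snd (0::real, h) * f2 (x, y))) (at y)"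
    unfolding has_partials_on_def by blast
  then show ?thesis
    unfolding has_field_derivative_def by (rule has_derivative_eq_rhs) (auto simp: fun_eq_iff)
qed

section \<open>An implicit function theorem with smooth solutions\<close>

lemma mvt_has_partials_on:
  assumes "convex S" and D: "has_partials_on S f f1 f2" and ab: "a \<in> S" "b \<in> S"
  shows "\<exists>\<xi>\<in>S. dist \<xi> a \<le> dist b a \<and> f b - f a = fst (b - a) * f1 \<xi> + snd (b - a) * f2 \<xi>"
proof -
  define p where "p t = a + t *\<^sub>R (b - a)" for t :: real
  have pS: "p t \<in> S" if "0 \<le> t" "t \<le> 1" for t
    using \<open>convex S\<close> ab that convex_def[of S, THEN iffD1, rule_format, of a b "1 - t" t]
    by (simp add: p_def algebra_simps)
  have der: "((\<lambda>t. f (p t)) has_real_derivative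
       fst (b - a) * f1 (p t) + snd (b - a) * f2 (p t)) (at t)" if "0 \<le> t" "t \<le> 1" for t
  proof -
    have "(p has_derivative (\<lambda>h. h *\<^sub>R (b - a))) (at t)"
      unfolding p_def by (auto intro!: derivative_eq_intros)
    from has_derivative_compose[OF this] D pS[OF that]
    have "((\<lambda>t. f (p t)) has_derivative
        (\<lambda>h. fst (h *\<^sub>R (b - a)) * f1 (p t) + snd (h *\<^sub>R (b - a)) * f2 (p t))) (at t)"
      unfolding has_partials_on_def by blast
    then show ?thesis unfolding has_field_derivative_def
      by (rule has_derivative_eq_rhs) (auto simp: fun_eq_iff algebra_simps)
  qed
  obtain \<tau> where \<tau>: "0 < \<tau>" "\<tau> < 1"
    "f (p 1) - f (p 0) = (1 - 0) * (fst (b - a) * f1 (p \<tau>) + snd (b - a) * f2 (p \<tau>))"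
    using MVT2[of 0 1 "\<lambda>t. f (p t)" "\<lambda>t. fst (b - a) * f1 (p t) + snd (b - a) * f2 (p t)"] der
    by auto
  have "dist (p \<tau>) a = \<tau> * dist b a"
    using \<tau> by (simp add: p_def dist_norm norm_minus_commute)
  also have "\<dots> \<le> dist b a" using \<tau> by (simp add: mult_left_le_one_le)
  finally show ?thesis
    using \<tau> pS[of \<tau>] by (intro bexI[of _ "p \<tau>"]) (auto simp: p_def)
qed

lemma rectangle_subset_open:
  fixes a b :: real
  assumes "open S" "(a, b) \<in> S"
  obtains r where "r > 0" "{a-r<..<a+r} \<times> {b-r<..<b+r} \<subseteq> S"
proof -
  obtain \<rho> where "\<rho> > 0" "ball (a, b) \<rho> \<subseteq> S"
    using assms open_contains_ball by blast
  moreover have "(x, y) \<in> ball (a, b) \<rho>"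
    if "x \<in> {a-\<rho>/2<..<a+\<rho>/2}" "y \<in> {b-\<rho>/2<..<b+\<rho>/2}" for x y
  proof -
    have "dist (a, b) (x, y) \<le> \<bar>a - x\<bar> + \<bar>b - y\<bar>"
      using sqrt_sum_squares_le_sum_abs by (simp add: dist_Pair_Pair dist_real_def)
    with that show ?thesis by auto
  qed
  ultimately show ?thesis by (intro that[of "\<rho>/2"]) auto
qed

locale continuous_increasing_in_snd =
  fixes \<Phi> :: "real \<times> real \<Rightarrow> real" and A I :: "real set"
  assumes open_A: "open A"
    and strict_mono_snd: "\<And>X. X \<in> A \<Longrightarrow> strict_mono_on I (\<lambda>u. \<Phi> (X, u))"
    and continuous_snd: "\<And>X. X \<in> A \<Longrightarrow> continuous_on I (\<lambda>u. \<Phi> (X, u))"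
    and continuous_fst: "\<And>u. u \<in> I \<Longrightarrow> continuous_on A (\<lambda>X. \<Phi> (X, u))"
begin

lemma zero_unique: "X \<in> A \<Longrightarrow> u \<in> I \<Longrightarrow> v \<in> I \<Longrightarrow> \<Phi> (X, u) = 0 \<Longrightarrow> \<Phi> (X, v) = 0 \<Longrightarrow> u = v"
  using strict_mono_on_imp_inj_on[OF strict_mono_snd] by (metis inj_onD)

lemma zero_persists:
  assumes "X1 \<in> A" "{u1-\<eta>..u1+\<eta>} \<subseteq> I" "\<eta> > 0" "\<Phi> (X1, u1) = 0"
  shows "\<forall>\<^sub>F X in nhds X1. \<exists>u. \<bar>u - u1\<bar> < \<eta> \<and> \<Phi> (X, u) = 0"
proof -
  have I: "u1 - \<eta> \<in> I" "u1 \<in> I" "u1 + \<eta> \<in> I" using assms(2,3) by auto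
  have "\<Phi> (X1, u1 - \<eta>) < 0" "\<Phi> (X1, u1 + \<eta>) > 0"
    using strict_mono_snd[OF \<open>X1 \<in> A\<close>] I assms(3,4) by (auto dest: strict_mono_onD)
  moreover have "((\<lambda>X. \<Phi> (X, u)) \<longlongrightarrow> \<Phi> (X1, u)) (nhds X1)" if "u \<in> I" for u
    using continuous_fst[OF that] open_A \<open>X1 \<in> A\<close> tendsto_at_iff_tendsto_nhds
    by (metis (no_types, lifting) continuous_on_eq_continuous_at isCont_def)
  ultimately have "\<forall>\<^sub>F X in nhds X1. X \<in> A \<and> \<Phi> (X, u1 - \<eta>) < 0 \<and> \<Phi> (X, u1 + \<eta>) > 0"
    using I open_A \<open>X1 \<in> A\<close> by (intro eventually_conj eventually_nhds_in_open order_tendstoD) auto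
  then show ?thesis
  proof (rule eventually_mono)
    fix X assume X: "X \<in> A \<and> \<Phi> (X, u1 - \<eta>) < 0 \<and> \<Phi> (X, u1 + \<eta>) > 0"
    then obtain u where "u1 - \<eta> \<le> u" "u \<le> u1 + \<eta>" "\<Phi> (X, u) = 0"
      using IVT'[of "\<lambda>u. \<Phi> (X, u)" "u1 - \<eta>" 0 "u1 + \<eta>"] continuous_on_subset[OF continuous_snd] assms(2,3)
      by force
    moreover from X this(3) have "u \<noteq> u1 - \<eta>" "u \<noteq> u1 + \<eta>" by auto
    ultimately show "\<exists>u. \<bar>u - u1\<bar> < \<eta> \<and> \<Phi> (X, u) = 0" by (intro exI[of _ u]) auto
  qed
qed

lemma zero_selector_isCont:
  assumes "{u0-\<delta>..u0+\<delta>} \<subseteq> I" "open S" "S \<subseteq> A" "X1 \<in> S"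
    and zero: "\<And>X. X \<in> S \<Longrightarrow> \<bar>\<phi> X - u0\<bar> < \<delta> \<and> \<Phi> (X, \<phi> X) = 0"
  shows "isCont \<phi> X1"
proof -
  have "\<forall>\<^sub>F X in nhds X1. dist (\<phi> X) (\<phi> X1) < e" if "e > 0" for e
  proof -
    define \<eta> where "\<eta> = min e (\<delta> - \<bar>\<phi> X1 - u0\<bar>)"
    have \<eta>: "\<eta> > 0" "\<eta> \<le> e" "\<bar>\<phi> X1 - u0\<bar> + \<eta> \<le> \<delta>"
      using zero[OF \<open>X1 \<in> S\<close>] \<open>e > 0\<close> by (auto simp: \<eta>_def)
    then have "{\<phi> X1 - \<eta>..\<phi> X1 + \<eta>} \<subseteq> {u0-\<delta>..u0+\<delta>}"
      by (auto simp: abs_le_iff)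
    with assms(1) have sub: "{\<phi> X1 - \<eta>..\<phi> X1 + \<eta>} \<subseteq> I" by blast
    have "\<forall>\<^sub>F X in nhds X1. X \<in> S \<and> (\<exists>u. \<bar>u - \<phi> X1\<bar> < \<eta> \<and> \<Phi> (X, u) = 0)"
      using assms(2-4) zero sub \<eta>(1) by (intro eventually_conj eventually_nhds_in_open zero_persists) auto
    then show ?thesis
    proof (rule eventually_mono, elim conjE exE)
      fix X u assume X: "X \<in> S" and u: "\<bar>u - \<phi> X1\<bar> < \<eta>" "\<Phi> (X, u) = 0"
      have "\<bar>u - u0\<bar> < \<delta>" using u(1) \<eta>(3) by linarith
      with zero[OF X] have "u \<in> {u0-\<delta>..u0+\<delta>}" "\<phi> X \<in> {u0-\<delta>..u0+\<delta>}" by auto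
      with assms(1) have "u \<in> I" "\<phi> X \<in> I" by auto
      with zero[OF X] assms(3) X u(2) have "u = \<phi> X" using zero_unique[of X u "\<phi> X"] by blast
      then show "dist (\<phi> X) (\<phi> X1) < e" using u(1) \<eta>(2) by (simp add: dist_real_def)
    qed
  qed
  then have "(\<phi> \<longlongrightarrow> \<phi> X1) (nhds X1)" by (rule tendstoI)
  then show ?thesis unfolding isCont_def tendsto_at_iff_tendsto_nhds .
qed

lemma implicit_function_continuous:
  assumes "0 \<in> A" "{u0-\<delta>..u0+\<delta>} \<subseteq> I" "\<delta> > 0" "\<Phi> (0, u0) = 0"
  obtains \<epsilon> \<phi> where "\<epsilon> > 0" "{-\<epsilon><..<\<epsilon>} \<subseteq> A"
    "\<And>X. X \<in> {-\<epsilon><..<\<epsilon>} \<Longrightarrow> \<bar>\<phi> X - u0\<bar> < \<delta> \<and> \<Phi> (X, \<phi> X) = 0"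
    "\<And>X u. X \<in> {-\<epsilon><..<\<epsilon>} \<Longrightarrow> \<bar>u - u0\<bar> < \<delta> \<Longrightarrow> \<Phi> (X, u) = 0 \<Longrightarrow> u = \<phi> X"
    "\<And>X. X \<in> {-\<epsilon><..<\<epsilon>} \<Longrightarrow> isCont \<phi> X"
proof -
  have "\<forall>\<^sub>F X in nhds 0. X \<in> A \<and> (\<exists>u. \<bar>u - u0\<bar> < \<delta> \<and> \<Phi> (X, u) = 0)"
    using assms open_A by (intro eventually_conj eventually_nhds_in_open zero_persists) auto
  then obtain \<epsilon> where "\<epsilon> > 0"
    and \<epsilon>: "\<And>X. X \<in> {-\<epsilon><..<\<epsilon>} \<Longrightarrow> X \<in> A \<and> (\<exists>u. \<bar>u - u0\<bar> < \<delta> \<and> \<Phi> (X, u) = 0)"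
    unfolding eventually_nhds_metric dist_real_def by (auto simp: abs_less_iff)
  have unique: "u = v" if "X \<in> {-\<epsilon><..<\<epsilon>}" "\<bar>u - u0\<bar> < \<delta>" "\<bar>v - u0\<bar> < \<delta>"
    "\<Phi> (X, u) = 0" "\<Phi> (X, v) = 0" for X u v
  proof -
    from that(2,3) have "u \<in> {u0-\<delta>..u0+\<delta>}" "v \<in> {u0-\<delta>..u0+\<delta>}" by auto
    with assms(2) have "u \<in> I" "v \<in> I" by auto
    with that \<epsilon>[OF that(1)] show ?thesis using zero_unique[of X u v] by blast
  qed
  define \<phi> where "\<phi> X = (THE u. \<bar>u - u0\<bar> < \<delta> \<and> \<Phi> (X, u) = 0)" for X
  have \<phi>: "\<bar>\<phi> X - u0\<bar> < \<delta> \<and> \<Phi> (X, \<phi> X) = 0" if "X \<in> {-\<epsilon><..<\<epsilon>}" for X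
    unfolding \<phi>_def using \<epsilon>[OF that] unique[OF that]
    by (intro theI'[of "\<lambda>u. \<bar>u - u0\<bar> < \<delta> \<and> \<Phi> (X, u) = 0"]) blast
  show ?thesis
  proof
    show "u = \<phi> X" if "X \<in> {-\<epsilon><..<\<epsilon>}" "\<bar>u - u0\<bar> < \<delta>" "\<Phi> (X, u) = 0" for X u
      using unique[OF that(1,2)] \<phi>[OF that(1)] that(3) by blast
    show "{-\<epsilon><..<\<epsilon>} \<subseteq> A" using \<epsilon> by blast
    then show "isCont \<phi> X" if "X \<in> {-\<epsilon><..<\<epsilon>}" for X
      by (rule zero_selector_isCont[OF assms(2) open_greaterThanLessThan _ that \<phi>])
  qed (use \<open>\<epsilon> > 0\<close> \<phi> in auto)
qed

end

lemma implicit_function_deriv: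
  assumes C: "convex C" "has_partials_on C \<Phi> \<Phi>1 \<Phi>2" "\<And>z. z \<in> C \<Longrightarrow> \<Phi>2 z \<noteq> 0"
    and cont: "isCont \<Phi>1 (X1, \<phi> X1)" "isCont \<Phi>2 (X1, \<phi> X1)" "isCont \<phi> X1"
    and zero: "\<forall>\<^sub>F X in nhds X1. (X, \<phi> X) \<in> C \<and> \<Phi> (X, \<phi> X) = 0"
  shows "(\<phi> has_real_derivative - \<Phi>1 (X1, \<phi> X1) / \<Phi>2 (X1, \<phi> X1)) (at X1)"
proof -
  define z1 where "z1 = (X1, \<phi> X1)"
  define G where "G z = - \<Phi>1 z / \<Phi>2 z" for z
  have z1: "z1 \<in> C" "\<Phi> z1 = 0" using eventually_nhds_x_imp_x[OF zero] by (auto simp: z1_def)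
  have "isCont G z1" unfolding G_def z1_def using cont C(3) z1 by (auto intro!: continuous_intros simp: z1_def)
  have graph: "((\<lambda>X. (X, \<phi> X)) \<longlongrightarrow> z1) (at X1)"
    unfolding z1_def using cont(3) by (intro tendsto_intros) (auto simp: isCont_def)
  text \<open>By the mean value theorem on the segment from \<open>z1\<close> to \<open>(X, \<phi> X)\<close>, each difference
    quotient of \<open>\<phi>\<close> is a value of \<open>G\<close> at a point no farther from \<open>z1\<close> than \<open>(X, \<phi> X)\<close>.\<close>
  have quotient: "\<exists>\<xi>. dist \<xi> z1 \<le> dist (X, \<phi> X) z1 \<and> (\<phi> X - \<phi> X1) / (X - X1) = G \<xi>"
    if X: "(X, \<phi> X) \<in> C" "\<Phi> (X, \<phi> X) = 0" "X \<noteq> X1" for X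
  proof -
    obtain \<xi> where \<xi>: "\<xi> \<in> C" "dist \<xi> z1 \<le> dist (X, \<phi> X) z1"
      "\<Phi> (X, \<phi> X) - \<Phi> z1 = (X - X1) * \<Phi>1 \<xi> + (\<phi> X - \<phi> X1) * \<Phi>2 \<xi>"
      using mvt_has_partials_on[OF C(1,2) z1(1) X(1)] by (auto simp: z1_def)
    have "0 = (X - X1) * \<Phi>1 \<xi> + (\<phi> X - \<phi> X1) * \<Phi>2 \<xi>"
      using \<xi>(3) X(2) z1(2) by simp
    then have "(\<phi> X - \<phi> X1) / (X - X1) = G \<xi>"
      using X(3) C(3)[OF \<xi>(1)] by (simp add: G_def field_simps)
    with \<xi>(2) show ?thesis by blast
  qed
  have "((\<lambda>X. (\<phi> X - \<phi> X1) / (X - X1)) \<longlongrightarrow> G z1) (at X1)"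
  proof (rule tendstoI)
    fix e :: real assume "e > 0"
    then obtain d where "d > 0" and d: "\<And>\<xi>. dist \<xi> z1 < d \<Longrightarrow> dist (G \<xi>) (G z1) < e"
      using \<open>isCont G z1\<close> unfolding continuous_at_eps_delta by blast
    have "\<forall>\<^sub>F X in at X1. dist (X, \<phi> X) z1 < d"
      using graph \<open>d > 0\<close> by (rule tendstoD)
    moreover have "\<forall>\<^sub>F X in at X1. (X, \<phi> X) \<in> C \<and> \<Phi> (X, \<phi> X) = 0"
      using zero by (auto simp: eventually_at_filter elim: eventually_mono)
    moreover have "\<forall>\<^sub>F X in at X1. X \<noteq> X1"
      by (rule eventually_neq_at_within)
    ultimately show "\<forall>\<^sub>F X in at X1. dist ((\<phi> X - \<phi> X1) / (X - X1)) (G z1) < e"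
    proof eventually_elim
      case (elim X)
      then obtain \<xi> where \<xi>: "dist \<xi> z1 \<le> dist (X, \<phi> X) z1" "(\<phi> X - \<phi> X1) / (X - X1) = G \<xi>"
        using quotient[of X] by blast
      with elim(1) have "dist \<xi> z1 < d" by linarith
      with d \<xi>(2) show ?case by simp
    qed
  qed
  then show ?thesis by (simp add: has_field_derivative_iff G_def z1_def)
qed

lemma has_partials_on_chain:
  assumes "has_partials_on C h h1 h2" "(X, \<phi> X) \<in> C" "(\<phi> has_real_derivative F) (at X)"
  shows "((\<lambda>X. h (X, \<phi> X)) has_real_derivative h1 (X, \<phi> X) + h2 (X, \<phi> X) * F) (at X)"
proof -
  have "((\<lambda>X. (X, \<phi> X)) has_derivative (\<lambda>t. (t, F * t))) (at X)"
    using has_derivative_Pair[OF has_derivative_ident assms(3)[unfolded has_field_derivative_def]] .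
  from has_derivative_compose[OF this] assms(1,2)
  have "((\<lambda>X. h (X, \<phi> X)) has_derivative
      (\<lambda>t. fst (t, F * t) * h1 (X, \<phi> X) + snd (t, F * t) * h2 (X, \<phi> X))) (at X)"
    unfolding has_partials_on_def by blast
  then show ?thesis unfolding has_field_derivative_def
    by (rule has_derivative_eq_rhs) (auto simp: fun_eq_iff algebra_simps)
qed

text \<open>Every \<open>h (X, \<phi> X)\<close> with \<open>h\<close> elementary has a derivative of the same form, so iterating
  yields derivatives of all orders of \<open>\<phi> = snd (X, \<phi> X)\<close>.\<close>
lemma ode_solution_smooth_on:
  assumes graph: "\<And>X. X \<in> S \<Longrightarrow> (X, \<phi> X) \<in> C"
    and ode: "\<And>X. X \<in> S \<Longrightarrow> (\<phi> has_real_derivative F (X, \<phi> X)) (at X)"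
    and "F \<in> elementary C"
  shows "smooth_on S \<phi>"
proof -
  have "\<exists>h'. h' \<in> elementary C \<and>
      (\<forall>X\<in>S. ((\<lambda>X. h (X, \<phi> X)) has_real_derivative h' (X, \<phi> X)) (at X))"
    if hC: "h \<in> elementary C" for h
  proof -
    obtain h1 h2 where h: "h1 \<in> elementary C" "h2 \<in> elementary C" "has_partials_on C h h1 h2"
      using elementary_has_partials[OF hC] by blast
    show ?thesis
    proof (intro exI[of _ "\<lambda>z. h1 z + h2 z * F z"] conjI ballI)
      show "(\<lambda>z. h1 z + h2 z * F z) \<in> elementary C"
        using h \<open>F \<in> elementary C\<close> by (intro elementary_add elementary_mult)
      fix X assume "X \<in> S"
      with h(3) graph ode show "((\<lambda>X. h (X, \<phi> X)) has_real_derivative h1 (X, \<phi> X) + h2 (X, \<phi> X) * F (X, \<phi> X)) (at X)"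
        by (intro has_partials_on_chain)
    qed
  qed
  then obtain D where D: "\<And>h. h \<in> elementary C \<Longrightarrow> D h \<in> elementary C \<and>
      (\<forall>X\<in>S. ((\<lambda>X. h (X, \<phi> X)) has_real_derivative D h (X, \<phi> X)) (at X))"
    by metis
  have D_iter: "(D ^^ n) snd \<in> elementary C" for n
  proof (induction n)
    case 0
    then show ?case by (simp add: elementary_snd)
  next
    case (Suc n)
    then show ?case using D by simp
  qed
  show ?thesis unfolding smooth_on_def
  proof (intro exI[of _ "\<lambda>n X. (D ^^ n) snd (X, \<phi> X)"] conjI allI ballI)
    fix n X assume "X \<in> S"
    with D[OF D_iter[of n]] show "((\<lambda>X. (D ^^ n) snd (X, \<phi> X)) has_real_derivative (D ^^ Suc n) snd (X, \<phi> X)) (at X)"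
      by simp
  qed simp
qed

lemma continuous_zero_graph_smooth:
  assumes C: "convex C" "has_partials_on C \<Phi> \<Phi>1 \<Phi>2" "\<Phi>1 \<in> elementary C" "\<Phi>2 \<in> elementary C"
      "\<And>z. z \<in> C \<Longrightarrow> \<Phi>2 z \<noteq> 0"
    and S: "open S" "\<And>X. X \<in> S \<Longrightarrow> (X, \<phi> X) \<in> C \<and> \<Phi> (X, \<phi> X) = 0"
      "\<And>X. X \<in> S \<Longrightarrow> isCont \<phi> X"
  shows "smooth_on S \<phi> \<and> (\<forall>X\<in>S. (\<phi> has_real_derivative - \<Phi>1 (X, \<phi> X) / \<Phi>2 (X, \<phi> X)) (at X))"
proof -
  have deriv: "(\<phi> has_real_derivative - \<Phi>1 (X, \<phi> X) / \<Phi>2 (X, \<phi> X)) (at X)" if X: "X \<in> S" for X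
  proof (rule implicit_function_deriv[of C \<Phi> \<Phi>1 \<Phi>2])
    show "isCont \<Phi>1 (X, \<phi> X)" "isCont \<Phi>2 (X, \<phi> X)"
      using S(2)[OF X] C(3,4) by (auto intro: elementary_isCont)
    have "\<forall>\<^sub>F Y in nhds X. Y \<in> S" using X S(1) by (rule eventually_nhds_in_open[rotated])
    then show "\<forall>\<^sub>F Y in nhds X. (Y, \<phi> Y) \<in> C \<and> \<Phi> (Y, \<phi> Y) = 0"
      by (rule eventually_mono) (rule S(2))
  qed (use C S(3) X in auto)
  moreover have "(\<lambda>z. - \<Phi>1 z / \<Phi>2 z) \<in> elementary C"
    using C(3-5) by (intro elementary_minus elementary_divide) auto
  then have "smooth_on S \<phi>"
    using S(2) deriv by (intro ode_solution_smooth_on[of _ \<phi> C "\<lambda>z. - \<Phi>1 z / \<Phi>2 z"]) auto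
  ultimately show ?thesis by blast
qed

lemma continuous_increasing_in_snd_rectangle:
  assumes partials: "has_partials_on ({a<..<b} \<times> {c<..<d}) \<Phi> \<Phi>1 \<Phi>2"
    and pos: "\<And>z. z \<in> {a<..<b} \<times> {c<..<d} \<Longrightarrow> \<Phi>2 z > 0"
  shows "continuous_increasing_in_snd \<Phi> {a<..<b} {c<..<d}"
proof
  fix X assume X: "X \<in> {a<..<b}"
  have snd: "((\<lambda>u. \<Phi> (X, u)) has_real_derivative \<Phi>2 (X, u)) (at u)" if "u \<in> {c<..<d}" for u
    using has_partials_on_deriv_snd[OF partials] X that by blast
  show "strict_mono_on {c<..<d} (\<lambda>u. \<Phi> (X, u))"
  proof (rule strict_mono_onI)
    fix u v assume uv: "u \<in> {c<..<d}" "v \<in> {c<..<d}" "u < v"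
    show "\<Phi> (X, u) < \<Phi> (X, v)"
    proof (rule DERIV_pos_imp_increasing[OF \<open>u < v\<close>])
      fix x assume "u \<le> x" "x \<le> v"
      with uv have "x \<in> {c<..<d}" by auto
      with snd pos X show "\<exists>y. ((\<lambda>u. \<Phi> (X, u)) has_real_derivative y) (at x) \<and> y > 0"
        by blast
    qed
  qed
  show "continuous_on {c<..<d} (\<lambda>u. \<Phi> (X, u))"
    using snd by (blast intro: continuous_at_imp_continuous_on DERIV_isCont)
next
  fix u assume "u \<in> {c<..<d}"
  then show "continuous_on {a<..<b} (\<lambda>X. \<Phi> (X, u))"
    using has_partials_on_deriv_fst[OF partials]
    by (blast intro: continuous_at_imp_continuous_on DERIV_isCont)
qed simp

definition smooth_zero_graph ::
    "(real \<times> real) set \<Rightarrow> (real \<times> real \<Rightarrow> real) \<Rightarrow> real \<Rightarrow> real \<Rightarrow> real \<Rightarrow> (real \<Rightarrow> real) \<Rightarrow> bool"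
  where "smooth_zero_graph U \<Phi> u0 \<epsilon> \<delta> \<phi> \<longleftrightarrow> smooth_on {-\<epsilon><..<\<epsilon>} \<phi> \<and> \<phi> 0 = u0 \<and>
           (\<forall>X\<in>{-\<epsilon><..<\<epsilon>}. \<bar>\<phi> X - u0\<bar> < \<delta> \<and> \<Phi> (X, \<phi> X) = 0) \<and>
           (\<forall>X u. \<bar>X\<bar> < \<epsilon> \<and> \<bar>u - u0\<bar> < \<delta> \<longrightarrow> (X, u) \<in> U \<and> (\<Phi> (X, u) = 0 \<longrightarrow> u = \<phi> X))"

lemma smooth_zero_graph_subset:
  "smooth_zero_graph B \<Phi> u0 \<epsilon> \<delta> \<phi> \<Longrightarrow> B \<subseteq> U \<Longrightarrow> smooth_zero_graph U \<Phi> u0 \<epsilon> \<delta> \<phi>"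
  unfolding smooth_zero_graph_def by blast

lemma smooth_on_subset: "smooth_on S f \<Longrightarrow> T \<subseteq> S \<Longrightarrow> smooth_on T f"
  unfolding smooth_on_def by blast

lemma smooth_zero_graph_shrink:
  assumes "smooth_zero_graph U \<Phi> u0 \<epsilon> \<delta> \<phi>" "0 < \<epsilon>'" "\<epsilon>' \<le> \<epsilon>"
  shows "smooth_zero_graph U \<Phi> u0 \<epsilon>' \<delta> \<phi>"
proof -
  have sub: "{-\<epsilon>'<..<\<epsilon>'} \<subseteq> {-\<epsilon><..<\<epsilon>}" using assms(3) by auto
  moreover have "\<bar>X\<bar> < \<epsilon>" if "\<bar>X\<bar> < \<epsilon>'" for X using that assms(3) by linarith
  ultimately show ?thesis
    using assms(1) smooth_on_subset[OF _ sub] unfolding smooth_zero_graph_def by blast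
qed

lemma smooth_zero_graph_mult:
  assumes "smooth_zero_graph U \<Phi> u0 \<epsilon> \<delta> \<phi>" "smooth_zero_graph U \<Psi> u0 \<epsilon> \<delta> \<psi>"
    and "\<bar>X\<bar> < \<epsilon>" "\<bar>u - u0\<bar> < \<delta>"
  shows "(X, u) \<in> U \<and> (\<Phi> (X, u) * \<Psi> (X, u) = 0 \<longleftrightarrow> u = \<phi> X \<or> u = \<psi> X)"
proof -
  have X: "X \<in> {-\<epsilon><..<\<epsilon>}" using assms(3) by auto
  with assms have "(X, u) \<in> U" "\<Phi> (X, u) = 0 \<Longrightarrow> u = \<phi> X" "\<Psi> (X, u) = 0 \<Longrightarrow> u = \<psi> X"
    "\<Phi> (X, \<phi> X) = 0" "\<Psi> (X, \<psi> X) = 0"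
    unfolding smooth_zero_graph_def by blast+
  then show ?thesis by auto
qed

lemma implicit_function_rectangle:
  fixes r u0 :: real
  defines "B \<equiv> {-r<..<r} \<times> {u0-r<..<u0+r}"
  assumes partials: "has_partials_on B \<Phi> \<Phi>1 \<Phi>2" and elem: "\<Phi>1 \<in> elementary B" "\<Phi>2 \<in> elementary B"
    and pos: "\<And>z. z \<in> B \<Longrightarrow> \<Phi>2 z > 0"
    and z0: "\<Phi> (0, u0) = 0" and \<delta>: "0 < \<delta>" "\<delta> < r"
  shows "\<exists>\<epsilon>>0. \<exists>\<phi>. smooth_zero_graph B \<Phi> u0 \<epsilon> \<delta> \<phi> \<and>
           (\<phi> has_real_derivative - \<Phi>1 (0, u0) / \<Phi>2 (0, u0)) (at 0)"
proof -
  interpret continuous_increasing_in_snd \<Phi> "{-r<..<r}" "{u0-r<..<u0+r}"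
    using partials pos unfolding B_def by (rule continuous_increasing_in_snd_rectangle)
  have "(0::real) \<in> {-r<..<r}" "{u0-\<delta>..u0+\<delta>} \<subseteq> {u0-r<..<u0+r}" using \<delta> by auto
  then obtain \<epsilon> \<phi> where "\<epsilon> > 0" "{-\<epsilon><..<\<epsilon>} \<subseteq> {-r<..<r}"
    and \<phi>: "\<And>X. X \<in> {-\<epsilon><..<\<epsilon>} \<Longrightarrow> \<bar>\<phi> X - u0\<bar> < \<delta> \<and> \<Phi> (X, \<phi> X) = 0"
    and unique: "\<And>X u. X \<in> {-\<epsilon><..<\<epsilon>} \<Longrightarrow> \<bar>u - u0\<bar> < \<delta> \<Longrightarrow> \<Phi> (X, u) = 0 \<Longrightarrow> u = \<phi> X"
    and cont: "\<And>X. X \<in> {-\<epsilon><..<\<epsilon>} \<Longrightarrow> isCont \<phi> X"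
    using implicit_function_continuous z0 \<delta>(1) by blast
  have box: "(X, u) \<in> B" if "X \<in> {-\<epsilon><..<\<epsilon>}" "\<bar>u - u0\<bar> < \<delta>" for X u
    using that \<delta>(2) \<open>{-\<epsilon><..<\<epsilon>} \<subseteq> {-r<..<r}\<close> by (auto simp: B_def)
  have smooth_deriv: "smooth_on {-\<epsilon><..<\<epsilon>} \<phi> \<and> (\<forall>X\<in>{-\<epsilon><..<\<epsilon>}.
      (\<phi> has_real_derivative - \<Phi>1 (X, \<phi> X) / \<Phi>2 (X, \<phi> X)) (at X))"
  proof (rule continuous_zero_graph_smooth[of B \<Phi> \<Phi>1 \<Phi>2])
    show "convex B" by (simp add: B_def convex_Times)
    show "\<Phi>2 z \<noteq> 0" if "z \<in> B" for z using pos[OF that] by simp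
  qed (use partials elem box \<phi> cont in auto)
  have "\<phi> 0 = u0" using unique[of 0 u0] \<open>\<epsilon> > 0\<close> z0 \<delta>(1) by auto
  have "(X, u) \<in> B \<and> (\<Phi> (X, u) = 0 \<longrightarrow> u = \<phi> X)" if "\<bar>X\<bar> < \<epsilon> \<and> \<bar>u - u0\<bar> < \<delta>" for X u
    using that box unique by (auto simp: abs_less_iff)
  then have "smooth_zero_graph B \<Phi> u0 \<epsilon> \<delta> \<phi>"
    using smooth_deriv \<open>\<phi> 0 = u0\<close> \<phi> unfolding smooth_zero_graph_def by blast
  moreover have "(\<phi> has_real_derivative - \<Phi>1 (0, u0) / \<Phi>2 (0, u0)) (at 0)"
    using smooth_deriv \<open>\<epsilon> > 0\<close> \<open>\<phi> 0 = u0\<close> by force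
  ultimately show ?thesis using \<open>\<epsilon> > 0\<close> by blast
qed

lemma implicit_function_increasing:
  assumes "open U" and partials: "has_partials_on U \<Phi> \<Phi>1 \<Phi>2"
    and elem: "\<Phi>1 \<in> elementary U" "\<Phi>2 \<in> elementary U"
    and z0: "(0, u0) \<in> U" "\<Phi> (0, u0) = 0" "\<Phi>2 (0, u0) > 0"
  shows "\<forall>\<^sub>F \<delta> in at_right 0. \<exists>\<epsilon>>0. \<exists>\<phi>. smooth_zero_graph U \<Phi> u0 \<epsilon> \<delta> \<phi> \<and>
           (\<phi> has_real_derivative - \<Phi>1 (0, u0) / \<Phi>2 (0, u0)) (at 0)"
proof -
  have "open (U \<inter> \<Phi>2 -` {0<..})"
    using \<open>open U\<close> elementary_isCont[OF elem(2)]
    by (intro continuous_open_preimage continuous_at_imp_continuous_on) auto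
  moreover have "(0, u0) \<in> U \<inter> \<Phi>2 -` {0<..}" using z0 by simp
  ultimately obtain r where "r > 0" and rect: "{-r<..<r} \<times> {u0-r<..<u0+r} \<subseteq> U \<inter> \<Phi>2 -` {0<..}"
    by (rule rectangle_subset_open) simp
  then have sub: "{-r<..<r} \<times> {u0-r<..<u0+r} \<subseteq> U"
    and pos: "\<And>z. z \<in> {-r<..<r} \<times> {u0-r<..<u0+r} \<Longrightarrow> \<Phi>2 z > 0" by auto
  have "\<exists>\<epsilon>>0. \<exists>\<phi>. smooth_zero_graph U \<Phi> u0 \<epsilon> \<delta> \<phi> \<and>
      (\<phi> has_real_derivative - \<Phi>1 (0, u0) / \<Phi>2 (0, u0)) (at 0)" if \<delta>: "0 < \<delta>" "\<delta> < r" for \<delta>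
  proof -
    obtain \<epsilon> \<phi> where "\<epsilon> > 0" "smooth_zero_graph ({-r<..<r} \<times> {u0-r<..<u0+r}) \<Phi> u0 \<epsilon> \<delta> \<phi>"
      "(\<phi> has_real_derivative - \<Phi>1 (0, u0) / \<Phi>2 (0, u0)) (at 0)"
      using implicit_function_rectangle[OF has_partials_on_subset[OF partials sub]
          elementary_subset[OF elem(1) sub] elementary_subset[OF elem(2) sub] pos z0(2) \<delta>]
      by blast
    with smooth_zero_graph_subset[OF _ sub] show ?thesis by blast
  qed
  with \<open>r > 0\<close> show ?thesis unfolding eventually_at_right_field by blast
qed

lemma implicit_function:
  assumes "open U" "has_partials_on U \<Phi> \<Phi>1 \<Phi>2" "\<Phi>1 \<in> elementary U" "\<Phi>2 \<in> elementary U"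
    and "(0, u0) \<in> U" "\<Phi> (0, u0) = 0" "\<Phi>2 (0, u0) \<noteq> 0"
  shows "\<forall>\<^sub>F \<delta> in at_right 0. \<exists>\<epsilon>>0. \<exists>\<phi>. smooth_zero_graph U \<Phi> u0 \<epsilon> \<delta> \<phi> \<and>
           (\<phi> has_real_derivative - \<Phi>1 (0, u0) / \<Phi>2 (0, u0)) (at 0)"
proof (cases "\<Phi>2 (0, u0) > 0")
  case True
  with assms show ?thesis by (intro implicit_function_increasing) auto
next
  case False
  with assms have "\<forall>\<^sub>F \<delta> in at_right 0. \<exists>\<epsilon>>0. \<exists>\<phi>. smooth_zero_graph U (\<lambda>z. - \<Phi> z) u0 \<epsilon> \<delta> \<phi> \<and>
      (\<phi> has_real_derivative - (- \<Phi>1 (0, u0)) / (- \<Phi>2 (0, u0))) (at 0)"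
    by (intro implicit_function_increasing has_partials_on_minus elementary_minus) auto
  then show ?thesis by (simp add: smooth_zero_graph_def)
qed

section \<open>The trisector near its point at infinity\<close>

definition F1_quadratic :: "real \<Rightarrow> real \<Rightarrow> real \<Rightarrow> real" where
  "F1_quadratic s c u = u^2 - (s - u * c)^2"

definition omega_domain :: "real \<Rightarrow> real \<Rightarrow> (real \<times> real) set" where
  "omega_domain s c = {z. 0 < 1 + (fst z)^2 * F1_quadratic s c (snd z)}"

text \<open>Since \<open>F1h X (u * X) 1 W = X\<^sup>2 * F1_quadratic s c u + 2 * W - W\<^sup>2\<close>, the root
  \<open>omega s c X (u * X)\<close> equals \<open>X\<^sup>2 * omega_scaled s c (X, u)\<close>; the rationalised form below
  has no singularity at \<open>X = 0\<close>.\<close>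
definition omega_scaled :: "real \<Rightarrow> real \<Rightarrow> real \<times> real \<Rightarrow> real" where
  "omega_scaled s c z =
     - F1_quadratic s c (snd z) / (1 + sqrt (1 + (fst z)^2 * F1_quadratic s c (snd z)))"

text \<open>With \<open>m = omega_scaled s c (X, u)\<close>, \<open>F2h k R X (u * X) 1 (X\<^sup>2 * m) = X\<^sup>4 * (A\<^sup>2 - X\<^sup>2 * B\<^sup>2)\<close>
  where \<open>G_factor \<sigma> = A + \<sigma> X B\<close>.\<close>
definition G_factor :: "real \<Rightarrow> real \<Rightarrow> real \<Rightarrow> real \<Rightarrow> real \<Rightarrow> real \<times> real \<Rightarrow> real" where
  "G_factor k R s c \<sigma> z =
     1 - 2 * k * omega_scaled s c z + (R^2 + k^2) * (fst z)^2 * (omega_scaled s c z)^2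
     + \<sigma> * fst z * (2 * R * omega_scaled s c z * sqrt (1 + (snd z)^2))"

lemma open_omega_domain: "open (omega_domain s c)"
  unfolding omega_domain_def F1_quadratic_def
  by (rule open_Collect_less) (auto intro!: continuous_intros)

lemma zero_in_omega_domain [simp]: "(0, u) \<in> omega_domain s c"
  by (simp add: omega_domain_def)

lemma elementary_F1_quadratic: "(\<lambda>z. F1_quadratic s c (snd z)) \<in> elementary U"
  unfolding F1_quadratic_def
  by (intro elementary_diff elementary_power elementary_mult elementary_snd elementary_const)

lemma elementary_omega_scaled: "omega_scaled s c \<in> elementary (omega_domain s c)"
proof -
  have "1 + sqrt (1 + (fst z)^2 * F1_quadratic s c (snd z)) \<noteq> 0" if "z \<in> omega_domain s c" for z
  proof -
    have "sqrt (1 + (fst z)^2 * F1_quadratic s c (snd z)) > 0"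
      using that by (simp add: omega_domain_def)
    then show ?thesis by linarith
  qed
  moreover have "(\<lambda>z. sqrt (1 + (fst z)^2 * F1_quadratic s c (snd z))) \<in> elementary (omega_domain s c)"
    by (intro elementary_sqrt elementary_add elementary_mult elementary_power elementary_fst
        elementary_const elementary_F1_quadratic) (auto simp: omega_domain_def)
  ultimately have "(\<lambda>z. - F1_quadratic s c (snd z) / (1 + sqrt (1 + (fst z)^2 * F1_quadratic s c (snd z))))
      \<in> elementary (omega_domain s c)"
    by (intro elementary_divide elementary_minus elementary_add elementary_const elementary_F1_quadratic)
      auto
  then show ?thesis unfolding omega_scaled_def[abs_def] .
qed

lemma elementary_G_factor: "G_factor k R s c \<sigma> \<in> elementary (omega_domain s c)"
proof -
  have "(\<lambda>z. sqrt (1 + (snd z)^2)) \<in> elementary (omega_domain s c)"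
    by (intro elementary_sqrt elementary_add elementary_power elementary_snd elementary_const)
      (auto simp: add_pos_nonneg)
  then show ?thesis unfolding G_factor_def[abs_def] using elementary_omega_scaled
    by (intro elementary_add elementary_diff elementary_mult elementary_power elementary_const
        elementary_fst) auto
qed

lemma G_factor_zero: "G_factor k R s c \<sigma> (0, u) = 1 + k * F1_quadratic s c u"
  by (simp add: G_factor_def omega_scaled_def)

lemma G_factor_deriv_fst:
  "((\<lambda>X. G_factor k R s c \<sigma> (X, u)) has_real_derivative
     - \<sigma> * R * F1_quadratic s c u * sqrt (1 + u^2)) (at 0)"
  unfolding G_factor_def omega_scaled_def fst_conv snd_conv
  by (rule derivative_eq_intros refl | simp)+

lemma omega_eq_omega_scaled:
  assumes "(X, u) \<in> omega_domain s c"
  shows "omega s c X (u * X) = X^2 * omega_scaled s c (X, u)"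
proof -
  define a where "a = F1_quadratic s c u"
  define r where "r = sqrt (1 + X^2 * a)"
  have r: "r > 0" "r^2 = 1 + X^2 * a"
    using assms by (simp_all add: r_def a_def omega_domain_def)
  have "1 + (u * X)^2 - (X * s - u * X * c)^2 = 1 + X^2 * a"
    by (simp add: a_def F1_quadratic_def power2_eq_square algebra_simps)
  then have "omega s c X (u * X) = 1 - r" by (simp add: omega_def r_def)
  also have "\<dots> = X^2 * (- a / (1 + r))"
  proof -
    have "(1 - r) * (1 + r) = - (X^2 * a)" using r(2) by (simp add: power2_eq_square algebra_simps)
    then show ?thesis using r(1) by (simp add: field_simps)
  qed
  finally show ?thesis by (simp add: omega_scaled_def a_def r_def)
qed

lemma trisectorG_eq_G_factor:
  assumes "X \<noteq> 0" "(X, u) \<in> omega_domain (spar t) (cpar t)"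
  shows "trisectorG k R t X u =
           G_factor k R (spar t) (cpar t) 1 (X, u) * G_factor k R (spar t) (cpar t) (-1) (X, u)"
proof -
  define m where "m = omega_scaled (spar t) (cpar t) (X, u)"
  define A where "A = 1 - 2 * k * m + (R^2 + k^2) * X^2 * m^2"
  define B where "B = 2 * R * m * sqrt (1 + u^2)"
  have B2: "B^2 = 4 * R^2 * m^2 * (1 + u^2)"
    by (simp add: B_def power_mult_distrib add_nonneg_nonneg)
  have "trisectorG k R t X u = F2h k R X (u * X) 1 (X^2 * m) / X^4"
    using assms omega_eq_omega_scaled by (simp add: trisectorG_def m_def)
  also have "F2h k R X (u * X) 1 (X^2 * m) = X^4 * (A^2 - X^2 * B^2)"
    unfolding F2h_def A_def B2 by algebra
  also have "\<dots> / X^4 = (A + 1 * X * B) * (A + (-1) * X * B)"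
    using assms(1) by (simp add: field_simps) algebra
  finally show ?thesis by (simp add: G_factor_def A_def B_def m_def)
qed

lemma G_factor_branch:
  assumes root: "1 + k * F1_quadratic s c u0 = 0"
    and simple: "((\<lambda>u. 1 + k * F1_quadratic s c u) has_real_derivative d) (at u0)" "d \<noteq> 0"
  shows "\<forall>\<^sub>F \<delta> in at_right 0. \<exists>\<epsilon>>0. \<exists>\<phi>. smooth_zero_graph (omega_domain s c) (G_factor k R s c \<sigma>) u0 \<epsilon> \<delta> \<phi> \<and>
           (\<phi> has_real_derivative \<sigma> * R * F1_quadratic s c u0 * sqrt (1 + u0^2) / d) (at 0)"
proof -
  obtain \<Phi>1 \<Phi>2 where elem: "\<Phi>1 \<in> elementary (omega_domain s c)" "\<Phi>2 \<in> elementary (omega_domain s c)"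
    and partials: "has_partials_on (omega_domain s c) (G_factor k R s c \<sigma>) \<Phi>1 \<Phi>2"
    using elementary_has_partials[OF elementary_G_factor] by blast
  have "\<Phi>1 (0, u0) = - \<sigma> * R * F1_quadratic s c u0 * sqrt (1 + u0^2)"
    using has_partials_on_deriv_fst[OF partials zero_in_omega_domain] G_factor_deriv_fst
    by (rule DERIV_unique)
  moreover have "\<Phi>2 (0, u0) = d"
  proof -
    have "((\<lambda>u. G_factor k R s c \<sigma> (0, u)) has_real_derivative \<Phi>2 (0, u0)) (at u0)"
      using has_partials_on_deriv_snd[OF partials zero_in_omega_domain] .
    then have "((\<lambda>u. 1 + k * F1_quadratic s c u) has_real_derivative \<Phi>2 (0, u0)) (at u0)"
      by (simp add: G_factor_zero)
    from this simple(1) show ?thesis by (rule DERIV_unique)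
  qed
  moreover have "G_factor k R s c \<sigma> (0, u0) = 0" using root by (simp add: G_factor_zero)
  ultimately have "\<forall>\<^sub>F \<delta> in at_right 0. \<exists>\<epsilon>>0. \<exists>\<phi>.
      smooth_zero_graph (omega_domain s c) (G_factor k R s c \<sigma>) u0 \<epsilon> \<delta> \<phi> \<and>
      (\<phi> has_real_derivative - \<Phi>1 (0, u0) / \<Phi>2 (0, u0)) (at 0)"
    using simple(2) by (intro implicit_function[OF open_omega_domain partials elem]) simp_all
  then show ?thesis using \<open>\<Phi>1 (0, u0) = _\<close> \<open>\<Phi>2 (0, u0) = d\<close> by simp
qed

lemma G_factor_branches:
  fixes R :: real
  assumes root: "1 + k * F1_quadratic s c u0 = 0"
    and simple: "((\<lambda>u. 1 + k * F1_quadratic s c u) has_real_derivative d) (at u0)" "d \<noteq> 0"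
  defines "\<beta> \<equiv> R * F1_quadratic s c u0 * sqrt (1 + u0^2)"
  obtains \<epsilon> \<delta> \<phi>1 \<phi>2 where "\<epsilon> > 0" "\<delta> > 0"
    "smooth_zero_graph (omega_domain s c) (G_factor k R s c 1) u0 \<epsilon> \<delta> \<phi>1"
    "smooth_zero_graph (omega_domain s c) (G_factor k R s c (-1)) u0 \<epsilon> \<delta> \<phi>2"
    "(\<phi>1 has_real_derivative \<beta> / d) (at 0)" "(\<phi>2 has_real_derivative - \<beta> / d) (at 0)"
proof -
  define branch where "branch \<sigma> \<delta> \<longleftrightarrow> (\<exists>\<epsilon>>0. \<exists>\<phi>.
      smooth_zero_graph (omega_domain s c) (G_factor k R s c \<sigma>) u0 \<epsilon> \<delta> \<phi> \<and>
      (\<phi> has_real_derivative \<sigma> * \<beta> / d) (at 0))" for \<sigma> \<delta>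
  have "\<forall>\<^sub>F \<delta> in at_right 0. branch \<sigma> \<delta>" for \<sigma>
    using G_factor_branch[OF root simple, where R=R and \<sigma>=\<sigma>]
    by (simp add: branch_def \<beta>_def mult.assoc)
  then have "\<forall>\<^sub>F \<delta> in at_right 0. \<delta> > 0 \<and> branch 1 \<delta> \<and> branch (-1) \<delta>"
    by (intro eventually_conj eventually_at_right_less)
  then obtain \<delta> where "\<delta> > 0" "branch 1 \<delta>" "branch (-1) \<delta>"
    using eventually_happens'[OF trivial_limit_at_right_real] by blast
  then obtain \<epsilon>1 \<epsilon>2 \<phi>1 \<phi>2 where "\<epsilon>1 > 0" "\<epsilon>2 > 0"
    and graphs: "smooth_zero_graph (omega_domain s c) (G_factor k R s c 1) u0 \<epsilon>1 \<delta> \<phi>1"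
      "smooth_zero_graph (omega_domain s c) (G_factor k R s c (-1)) u0 \<epsilon>2 \<delta> \<phi>2"
    and "(\<phi>1 has_real_derivative \<beta> / d) (at 0)" "(\<phi>2 has_real_derivative - \<beta> / d) (at 0)"
    unfolding branch_def by auto
  moreover have "min \<epsilon>1 \<epsilon>2 > 0" using \<open>\<epsilon>1 > 0\<close> \<open>\<epsilon>2 > 0\<close> by simp
  moreover have "smooth_zero_graph (omega_domain s c) (G_factor k R s c 1) u0 (min \<epsilon>1 \<epsilon>2) \<delta> \<phi>1"
    "smooth_zero_graph (omega_domain s c) (G_factor k R s c (-1)) u0 (min \<epsilon>1 \<epsilon>2) \<delta> \<phi>2"
    using graphs \<open>min \<epsilon>1 \<epsilon>2 > 0\<close> by (auto intro: smooth_zero_graph_shrink)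
  ultimately show ?thesis using \<open>\<delta> > 0\<close> that by blast
qed

lemma cpar_sq_add_spar_sq: "(cpar t)^2 + (spar t)^2 = 1"
proof -
  have "1 + t^2 > 0" by (simp add: add_pos_nonneg)
  have "(cpar t)^2 + (spar t)^2 = ((1 - t^2)^2 + (2 * t)^2) / (1 + t^2)^2"
    unfolding cpar_def spar_def by (simp add: power_divide add_divide_distrib)
  also have "(1 - t^2)^2 + (2 * t)^2 = (1 + t^2)^2" by algebra
  finally show ?thesis using \<open>1 + t^2 > 0\<close> by simp
qed

lemma spar_nonzero: "t \<noteq> 0 \<Longrightarrow> spar t \<noteq> 0"
proof -
  have "1 + t^2 > 0" by (simp add: add_pos_nonneg)
  then show "t \<noteq> 0 \<Longrightarrow> spar t \<noteq> 0" unfolding spar_def by simp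
qed

lemma gk_eq_F1_quadratic: "gk k t u = 1 + k * F1_quadratic (spar t) (cpar t) u"
proof -
  have "(cpar t)^2 = 1 - (spar t)^2" using cpar_sq_add_spar_sq[of t] by simp
  then show ?thesis unfolding gk_def F1_quadratic_def by algebra
qed

lemma gk_eq_square: "gk k t u = k * (spar t * u + cpar t)^2 + 1 - k"
proof -
  have "(cpar t)^2 = 1 - (spar t)^2" using cpar_sq_add_spar_sq[of t] by simp
  then show ?thesis unfolding gk_def by algebra
qed

lemma has_real_derivative_gk:
  "(gk k t has_real_derivative 2 * k * spar t * (spar t * u + cpar t)) (at u)"
  unfolding gk_def[abs_def] by (rule derivative_eq_intros refl | simp add: power2_eq_square algebra_simps)+

lemma gk_root_deriv_nonzero:
  assumes "gk k t u = 0" "t \<noteq> 0" "k \<noteq> 1"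
  shows "2 * k * spar t * (spar t * u + cpar t) \<noteq> 0"
proof -
  have "k * (spar t * u + cpar t)^2 = k - 1" using assms(1) gk_eq_square[of k t u] by linarith
  then have "k \<noteq> 0" "spar t * u + cpar t \<noteq> 0" using assms(3) by auto
  with spar_nonzero[OF assms(2)] show ?thesis by simp
qed

lemma gk_pos:
  assumes "0 \<le> k" "k < 1"
  shows "gk k t u > 0"
proof -
  have "k * (spar t * u + cpar t)^2 \<ge> 0" using assms(1) by simp
  with assms(2) show ?thesis using gk_eq_square[of k t u] by linarith
qed

lemma gk_roots:
  assumes "k < 0 \<or> k > 1" "t \<noteq> 0"
  obtains u1 u2 where "u1 \<noteq> u2" "gk k t u1 = 0" "gk k t u2 = 0"
    "\<And>u. gk k t u = 0 \<Longrightarrow> u = u1 \<or> u = u2"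
proof -
  define s c where "s = spar t" and "c = cpar t"
  define w where "w = sqrt ((k - 1) / k)"
  have "k \<noteq> 0" using assms(1) by auto
  have "(k - 1) / k > 0" using assms(1) by (auto simp: zero_less_divide_iff)
  then have w: "w > 0" "w^2 = (k - 1) / k" by (simp_all add: w_def)
  have root_iff: "gk k t u = 0 \<longleftrightarrow> s * u + c = w \<or> s * u + c = - w" for u
  proof -
    have "gk k t u = 0 \<longleftrightarrow> k * (s * u + c)^2 = k - 1"
      unfolding gk_eq_square s_def c_def by linarith
    also have "k - 1 = k * w^2" using \<open>k \<noteq> 0\<close> w(2) by simp
    also have "k * (s * u + c)^2 = k * w^2 \<longleftrightarrow> (s * u + c)^2 = w^2"
      using \<open>k \<noteq> 0\<close> by simp
    also have "\<dots> \<longleftrightarrow> s * u + c = w \<or> s * u + c = - w"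
      by (rule power2_eq_iff)
    finally show ?thesis .
  qed
  have "s \<noteq> 0" using spar_nonzero[OF assms(2)] by (simp add: s_def)
  show ?thesis
  proof (rule that[of "(w - c) / s" "(- w - c) / s"])
    show "(w - c) / s \<noteq> (- w - c) / s" using \<open>s \<noteq> 0\<close> w(1) by (simp add: divide_cancel_right)
    show "gk k t ((w - c) / s) = 0" "gk k t ((- w - c) / s) = 0"
      using root_iff \<open>s \<noteq> 0\<close> by simp_all
    show "u = (w - c) / s \<or> u = (- w - c) / s" if "gk k t u = 0" for u
      using that root_iff \<open>s \<noteq> 0\<close> by (auto simp: eq_divide_eq algebra_simps)
  qed
qed

lemma trisectorG_zero_iff_graphs:
  assumes "smooth_zero_graph (omega_domain (spar t) (cpar t)) (G_factor k R (spar t) (cpar t) 1) u0 \<epsilon> \<delta> \<phi>1"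
    and "smooth_zero_graph (omega_domain (spar t) (cpar t)) (G_factor k R (spar t) (cpar t) (-1)) u0 \<epsilon> \<delta> \<phi>2"
    and "X \<noteq> 0" "\<bar>X\<bar> < \<epsilon>" "\<bar>u - u0\<bar> < \<delta>"
  shows "trisectorG k R t X u = 0 \<longleftrightarrow> u = \<phi>1 X \<or> u = \<phi>2 X"
  using smooth_zero_graph_mult[OF assms(1,2,4,5)] trisectorG_eq_G_factor[OF assms(3)] by simp

definition transverse_crossing_at :: "real \<Rightarrow> real \<Rightarrow> real \<Rightarrow> real \<Rightarrow> bool" where
  "transverse_crossing_at k R t u0 \<longleftrightarrow> (\<exists>\<epsilon> > 0. \<exists>\<delta> > 0. \<exists>\<phi>1 \<phi>2 :: real \<Rightarrow> real.
           smooth_on {-\<epsilon><..<\<epsilon>} \<phi>1 \<and> smooth_on {-\<epsilon><..<\<epsilon>} \<phi>2 \<and>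
           \<phi>1 0 = u0 \<and> \<phi>2 0 = u0 \<and> deriv \<phi>1 0 \<noteq> deriv \<phi>2 0 \<and>
           (\<forall>X\<in>{-\<epsilon><..<\<epsilon>}. \<bar>\<phi>1 X - u0\<bar> < \<delta> \<and> \<bar>\<phi>2 X - u0\<bar> < \<delta>) \<and>
           (\<forall>X u. 0 < \<bar>X\<bar> \<and> \<bar>X\<bar> < \<epsilon> \<and> \<bar>u - u0\<bar> < \<delta> \<longrightarrow>
              (trisectorG k R t X u = 0 \<longleftrightarrow> u = \<phi>1 X \<or> u = \<phi>2 X)))"

lemma trisector_crossing:
  assumes "R > 0" "gk k t u0 = 0" "(gk k t has_real_derivative d) (at u0)" "d \<noteq> 0"
  shows "transverse_crossing_at k R t u0"
proof -
  define s c where "s = spar t" and "c = cpar t"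
  have g: "gk k t = (\<lambda>u. 1 + k * F1_quadratic s c u)"
    by (simp add: fun_eq_iff gk_eq_F1_quadratic s_def c_def)
  with assms(2) have root: "1 + k * F1_quadratic s c u0 = 0" by simp
  then have "F1_quadratic s c u0 \<noteq> 0" by auto
  moreover have "sqrt (1 + u0^2) > 0" by (simp add: add_pos_nonneg)
  ultimately have "R * F1_quadratic s c u0 * sqrt (1 + u0^2) \<noteq> 0" using assms(1) by simp
  obtain \<epsilon> \<delta> \<phi>1 \<phi>2 where "\<epsilon> > 0" "\<delta> > 0"
    and graphs: "smooth_zero_graph (omega_domain s c) (G_factor k R s c 1) u0 \<epsilon> \<delta> \<phi>1"
      "smooth_zero_graph (omega_domain s c) (G_factor k R s c (-1)) u0 \<epsilon> \<delta> \<phi>2"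
    and derivs: "(\<phi>1 has_real_derivative R * F1_quadratic s c u0 * sqrt (1 + u0^2) / d) (at 0)"
      "(\<phi>2 has_real_derivative - (R * F1_quadratic s c u0 * sqrt (1 + u0^2)) / d) (at 0)"
    using G_factor_branches[OF root assms(3)[unfolded g] assms(4)] by blast
  have "deriv \<phi>1 0 \<noteq> deriv \<phi>2 0"
    using DERIV_imp_deriv[OF derivs(1)] DERIV_imp_deriv[OF derivs(2)]
      \<open>R * F1_quadratic s c u0 * sqrt (1 + u0^2) \<noteq> 0\<close> assms(4) by simp
  moreover have "trisectorG k R t X u = 0 \<longleftrightarrow> u = \<phi>1 X \<or> u = \<phi>2 X"
    if "0 < \<bar>X\<bar> \<and> \<bar>X\<bar> < \<epsilon> \<and> \<bar>u - u0\<bar> < \<delta>" for X u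
    using that trisectorG_zero_iff_graphs[of t k R u0 \<epsilon> \<delta> \<phi>1 \<phi>2 X u] graphs
    by (auto simp: s_def c_def)
  ultimately show ?thesis
    using \<open>\<epsilon> > 0\<close> \<open>\<delta> > 0\<close> graphs
    unfolding transverse_crossing_at_def smooth_zero_graph_def by blast
qed

lemma trisector_no_branch:
  assumes "gk k t u0 \<noteq> 0"
  shows "(0, u0) \<notin> closure {(X, u). X \<noteq> 0 \<and> trisectorG k R t X u = 0}"
proof -
  define s c where "s = spar t" and "c = cpar t"
  define P where "P z = G_factor k R s c 1 z * G_factor k R s c (-1) z" for z
  have "P \<in> elementary (omega_domain s c)"
    unfolding P_def[abs_def] by (intro elementary_mult elementary_G_factor)
  then have "isCont P (0, u0)" by (rule elementary_isCont) simp
  moreover have "P (0, u0) \<noteq> 0"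
    using assms by (simp add: P_def G_factor_zero gk_eq_F1_quadratic s_def c_def)
  ultimately have "\<forall>\<^sub>F z in nhds (0, u0). z \<in> omega_domain s c \<and> P z \<noteq> 0"
    by (intro eventually_conj eventually_nhds_in_open open_omega_domain zero_in_omega_domain
        tendsto_imp_eventually_ne) (auto simp: isCont_def tendsto_at_iff_tendsto_nhds)
  then obtain T where "open T" "(0, u0) \<in> T" and T: "\<And>z. z \<in> T \<Longrightarrow> z \<in> omega_domain s c \<and> P z \<noteq> 0"
    unfolding eventually_nhds by blast
  have "T \<inter> {(X, u). X \<noteq> 0 \<and> trisectorG k R t X u = 0} = {}"
    using T trisectorG_eq_G_factor by (fastforce simp: P_def s_def c_def)
  with \<open>open T\<close> \<open>(0, u0) \<in> T\<close> show ?thesis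
    using open_Int_closure_eq_empty by blast
qed

theorem theorem5:
  fixes k R t :: real
  assumes "R > 0" and "t \<noteq> 0" and "k \<noteq> 0" and "k \<noteq> 1"
  shows "((k < 0 \<or> k > 1) \<longrightarrow>
           (\<exists>u1 u2. u1 \<noteq> u2 \<and> gk k t u1 = 0 \<and> gk k t u2 = 0 \<and>
              (\<forall>u. gk k t u = 0 \<longrightarrow> u = u1 \<or> u = u2) \<and>
              (\<forall>u0\<in>{u1, u2}.
                 \<exists>\<epsilon> > 0. \<exists>\<delta> > 0. \<exists>\<phi>1 \<phi>2 :: real \<Rightarrow> real.
                   smooth_on {-\<epsilon><..<\<epsilon>} \<phi>1 \<and> smooth_on {-\<epsilon><..<\<epsilon>} \<phi>2 \<and>
                   \<phi>1 0 = u0 \<and> \<phi>2 0 = u0 \<and> deriv \<phi>1 0 \<noteq> deriv \<phi>2 0 \<and>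
                   (\<forall>X\<in>{-\<epsilon><..<\<epsilon>}. \<bar>\<phi>1 X - u0\<bar> < \<delta> \<and> \<bar>\<phi>2 X - u0\<bar> < \<delta>) \<and>
                   (\<forall>X u. 0 < \<bar>X\<bar> \<and> \<bar>X\<bar> < \<epsilon> \<and> \<bar>u - u0\<bar> < \<delta> \<longrightarrow>
                      (trisectorG k R t X u = 0 \<longleftrightarrow> u = \<phi>1 X \<or> u = \<phi>2 X)))))
       \<and> ((0 < k \<and> k < 1) \<longrightarrow>
           (\<forall>u. gk k t u \<noteq> 0) \<and>
           (\<forall>u0. (0, u0) \<notin> closure {(X, u). X \<noteq> 0 \<and> trisectorG k R t X u = 0}))"
  unfolding transverse_crossing_at_def[symmetric]
proof (intro conjI impI)
  assume "k < 0 \<or> k > 1"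
  then obtain u1 u2 where roots: "u1 \<noteq> u2" "gk k t u1 = 0" "gk k t u2 = 0"
    "\<And>u. gk k t u = 0 \<Longrightarrow> u = u1 \<or> u = u2"
    using gk_roots assms(2) by blast
  moreover have "transverse_crossing_at k R t u0" if "gk k t u0 = 0" for u0
    using trisector_crossing[OF assms(1) that has_real_derivative_gk gk_root_deriv_nonzero[OF that]]
      assms(2,4) by blast
  ultimately show "\<exists>u1 u2. u1 \<noteq> u2 \<and> gk k t u1 = 0 \<and> gk k t u2 = 0 \<and>
      (\<forall>u. gk k t u = 0 \<longrightarrow> u = u1 \<or> u = u2) \<and> (\<forall>u0\<in>{u1, u2}. transverse_crossing_at k R t u0)"
    by blast
next
  assume "0 < k \<and> k < 1"
  then have "gk k t u > 0" for u by (intro gk_pos) auto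
  then show "\<forall>u. gk k t u \<noteq> 0" by (metis less_irrefl)
  then show "\<forall>u0. (0, u0) \<notin> closure {(X, u). X \<noteq> 0 \<and> trisectorG k R t X u = 0}"
    using trisector_no_branch by blast
qed

end
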